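(* Let $p>1$ and $q>0$ be integers, and let $A\in\mathbb{R}^{(p+q)\times(p+q)}$ with columns $\alpha_1,\dots,\alpha_{p+q}$. Suppose $A$ is a positive operator of $M(p,q)$, i.e. $A\,M(p,q)\subseteq M(p,q)$. Then: (i) for each $i=1,\dots,p$, the transpose of the $i$-th row of $A$ belongs to $L(p,q)$; (ii) for each $i=1,\dots,p$, the column $\alpha_i$ belongs to $M(p,q)$; (iii) for each $i=1,\dots,p$ and every $u=(u_1,\dots,u_q)^\top\in\mathbb{R}^q$ with $\|u\|=1$, the vector $\alpha_i+\sum_{j=1}^q u_j\alpha_{p+j}$ belongs to $M(p,q)$; (iv) for each $i=1,\dots,p$ and each $j=1,\dots,q$, the vector $\alpha_i+\alpha_{p+j}$ belongs to $M(p,q)$; (v) if $A$ is Lyapunov-like on $M(p,q)$, then $e^{tA}\in\operatorname{Aut}(M(p,q))$ for every $t\in\mathbb{R}$, and in particular $e^{tA}$ is a positive operator of $M(p,q)$ for every $t\in\mathbb{R}$.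
   Context: Let $e=(1,\dots,1)\in\mathbb{R}^p$. Identify $\mathbb{R}^p\times\mathbb{R}^q$ with $\mathbb{R}^{p+q}$ (column vectors) with the standard inner product $\langle\cdot,\cdot\rangle$ and Euclidean norm $\|\cdot\|$. Define the extended Lorentz cones \[L(p,q)=\{(x,u)\in\mathbb{R}^p\times\mathbb{R}^q:\ x\ge\|u\|e\}\] (componentwise inequality) and \[M(p,q)=\{(x,u)\in\mathbb{R}^p\times\mathbb{R}^q:\ \langle x,e\rangle\ge\|u\|,\ x\ge 0\}.\] A matrix $A$ is a positive operator of a cone $C$ if $AC\subseteq C$. For a cone $K\subseteq\mathbb{R}^m$, its dual cone is $K^*=\{y:\langle x,y\rangle\ge0\ \forall x\in K\}$, and its complementarity set is $C(K)=\{(x,s):x\in K,\ s\in K^*,\ \langle x,s\rangle=0\}$. A matrix $A$ is Lyapunov-like on $K$ if $\langle Ax,s\rangle=0$ for all $(x,s)\in C(K)$. $\operatorname{Aut}(K)$ denotes the group of invertible linear maps $B$ with $BK=K$. *)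

theory Defs
  imports Complex_Main "Jordan_Normal_Form.Matrix"
begin

text \<open>Vectors of R^(p+q) are JNF vectors of dimension p+q; index k<p is the x-part,
  index p+j (j<q) is the u-part (0-based indices).\<close>

definition vnorm :: "real vec \<Rightarrow> real" where
  "vnorm v = sqrt (\<Sum>i<dim_vec v. (v $ i)^2)"

definition unorm :: "nat \<Rightarrow> nat \<Rightarrow> real vec \<Rightarrow> real" where
  "unorm p q v = sqrt (\<Sum>j<q. (v $ (p + j))^2)"

definition L_cone :: "nat \<Rightarrow> nat \<Rightarrow> real vec set" where
  "L_cone p q = {v \<in> carrier_vec (p + q). \<forall>i<p. v $ i \<ge> unorm p q v}"

definition M_cone :: "nat \<Rightarrow> nat \<Rightarrow> real vec set" where
  "M_cone p q = {v \<in> carrier_vec (p + q).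
      (\<Sum>i<p. v $ i) \<ge> unorm p q v \<and> (\<forall>i<p. v $ i \<ge> 0)}"

definition positive_operator :: "real mat \<Rightarrow> real vec set \<Rightarrow> bool" where
  "positive_operator A K \<longleftrightarrow> (\<lambda>x. A *\<^sub>v x) ` K \<subseteq> K"

definition dual_cone :: "nat \<Rightarrow> real vec set \<Rightarrow> real vec set" where
  "dual_cone n K = {y \<in> carrier_vec n. \<forall>x\<in>K. scalar_prod x y \<ge> 0}"

definition compl_set :: "nat \<Rightarrow> real vec set \<Rightarrow> (real vec \<times> real vec) set" where
  "compl_set n K = {(x, s). x \<in> K \<and> s \<in> dual_cone n K \<and> scalar_prod x s = 0}"

definition lyapunov_like :: "nat \<Rightarrow> real mat \<Rightarrow> real vec set \<Rightarrow> bool" where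
  "lyapunov_like n A K \<longleftrightarrow> (\<forall>(x, s) \<in> compl_set n K. scalar_prod (A *\<^sub>v x) s = 0)"

definition Aut :: "nat \<Rightarrow> real vec set \<Rightarrow> real mat set" where
  "Aut n K = {B \<in> carrier_mat n n. invertible_mat B \<and> (\<lambda>x. B *\<^sub>v x) ` K = K}"

definition mat_exp :: "real \<Rightarrow> real mat \<Rightarrow> real mat" where
  "mat_exp t A = mat (dim_row A) (dim_col A)
     (\<lambda>(i, j). \<Sum>k. (t ^ k / fact k) * (A ^\<^sub>m k) $$ (i, j))"

end

theory Submission
  imports Defs "HOL-Analysis.L2_Norm"
begin

text \<open>
  Parts (i)--(iv): apply \<open>A\<close> to suitable elements of \<open>M(p,q)\<close> and read off the \<open>x\<close>-part
  of the image. Part (v): every element of \<open>L(p,q)\<close> lies in the dual cone of \<open>M(p,q)\<close>, so the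
  Lyapunov condition can be tested on explicit complementary pairs, and this forces
  \<open>A = a I + (0 \<oplus> S)\<close> with \<open>S\<close> skew-symmetric. Then \<open>exp(tA)\<close> multiplies the \<open>x\<close>-part by
  \<open>exp(ta)\<close>, and since \<open>exp(tA)\<^sup>T exp(tA) = exp(t(A\<^sup>T + A)) = exp(2ta) I\<close> it multiplies the
  Euclidean norm by \<open>exp(ta)\<close> as well; so it maps \<open>M(p,q)\<close> into itself, and so does its
  inverse \<open>exp(-tA)\<close>, which is of the same kind.
\<close>

lemma sum_lessThan_add: "(\<Sum>i<p + q. f i) = (\<Sum>i<p. f i) + (\<Sum>j<q. f (p + j :: nat))"
  by (induction q) (auto simp: add.assoc)

lemma less_add_cases:
  fixes i p q :: nat
  assumes "i < p + q"
  obtains "i < p" | m where "m < q" "i = p + m"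
proof (cases "i < p")
  case True
  then show ?thesis by (rule that(1))
next
  case False
  then show ?thesis using assms that(2)[of "i - p"] by simp
qed

lemma sum_mult_delta_right[simp]:
  fixes F :: "'b \<Rightarrow> 'a :: semiring_0"
  shows "finite S \<Longrightarrow> (\<Sum>c\<in>S. F c * (if c = i then a else 0)) = (if i \<in> S then F i * a else 0)"
  by (simp add: if_distrib[of "\<lambda>x. _ * x"] cong: if_cong)

lemma sum_mult_delta_left[simp]:
  fixes F :: "'b \<Rightarrow> 'a :: semiring_0"
  shows "finite S \<Longrightarrow> (\<Sum>c\<in>S. (if c = i then a else 0) * F c) = (if i \<in> S then a * F i else 0)"
  by (simp add: if_distrib[of "\<lambda>x. x * _"] cong: if_cong)

lemma sum_power2_delta[simp]:
  fixes a :: "'a :: semiring_1"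
  shows "finite S \<Longrightarrow> (\<Sum>c\<in>S. (if c = i then a else 0)\<^sup>2) = (if i \<in> S then a\<^sup>2 else 0)"
  by (simp add: if_distrib[of "\<lambda>x. x\<^sup>2"] cong: if_cong)

lemma sum_mult_ge_neg_L2_set:
  fixes a b :: "'a \<Rightarrow> real"
  shows "- (L2_set a S * L2_set b S) \<le> (\<Sum>j\<in>S. a j * b j)"
proof -
  have "- (\<Sum>j\<in>S. a j * b j) \<le> \<bar>\<Sum>j\<in>S. a j * b j\<bar>" by (rule abs_ge_minus_self)
  also have "\<dots> \<le> (\<Sum>j\<in>S. \<bar>a j\<bar> * \<bar>b j\<bar>)" unfolding abs_mult[symmetric] by (rule sum_abs)
  finally have "- (\<Sum>j\<in>S. a j * b j) \<le> (\<Sum>j\<in>S. \<bar>a j\<bar> * \<bar>b j\<bar>)" .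
  then show ?thesis using L2_set_mult_ineq[of a b S] by linarith
qed

section \<open>Matrix exponential\<close>

lemma index_mult_mat_sum:
  assumes "X \<in> carrier_mat n n" "Y \<in> carrier_mat n n" "i < n" "j < n"
  shows "(X * Y) $$ (i, j) = (\<Sum>l<n. X $$ (i, l) * Y $$ (l, j))"
  using assms by (simp add: scalar_prod_def atLeast0LessThan)

lemma smult_one_mat_mult_mat_vec:
  assumes "v \<in> carrier_vec n"
  shows "(c \<cdot>\<^sub>m 1\<^sub>m n) *\<^sub>v v = c \<cdot>\<^sub>v (v :: 'a :: comm_semiring_1 vec)"
  using assms
  by (intro eq_vecI) (auto simp: scalar_prod_def atLeast0LessThan mult.assoc simp flip: sum_distrib_left)

lemma pow_mat_commute:
  fixes X Y :: "'a :: semiring_1 mat"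
  assumes X: "X \<in> carrier_mat n n" and Y: "Y \<in> carrier_mat n n" and XY: "X * Y = Y * X"
  shows "Y ^\<^sub>m k * X = X * Y ^\<^sub>m k"
proof (induction k)
  case 0
  then show ?case using X Y by simp
next
  case (Suc k)
  have Yk: "Y ^\<^sub>m k \<in> carrier_mat n n" using Y by simp
  have "Y ^\<^sub>m Suc k * X = Y ^\<^sub>m k * (X * Y)" using assoc_mult_mat[OF Yk Y X] XY by simp
  also have "\<dots> = X * Y ^\<^sub>m Suc k"
    using Suc assoc_mult_mat[OF Yk X Y, symmetric] assoc_mult_mat[OF X Yk Y] by simp
  finally show ?case .
qed

lemma abs_index_pow_mat_le:
  fixes X :: "real mat"
  assumes X: "X \<in> carrier_mat n n" and c: "\<And>a b. a < n \<Longrightarrow> b < n \<Longrightarrow> \<bar>X $$ (a, b)\<bar> \<le> c"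
    and "i < n" "j < n"
  shows "\<bar>(X ^\<^sub>m k) $$ (i, j)\<bar> \<le> (real n * c) ^ k"
  using \<open>i < n\<close> \<open>j < n\<close>
proof (induction k arbitrary: i j)
  case 0
  then show ?case using X by simp
next
  case (Suc k)
  have "0 \<le> c" using c[OF Suc.prems] by linarith
  have "\<bar>(X ^\<^sub>m Suc k) $$ (i, j)\<bar> = \<bar>\<Sum>l<n. (X ^\<^sub>m k) $$ (i, l) * X $$ (l, j)\<bar>"
    using index_mult_mat_sum[OF pow_carrier_mat[OF X] X Suc.prems] by simp
  also have "\<dots> \<le> (\<Sum>l<n. \<bar>(X ^\<^sub>m k) $$ (i, l)\<bar> * \<bar>X $$ (l, j)\<bar>)"
    unfolding abs_mult[symmetric] by (rule sum_abs)
  also have "\<dots> \<le> (\<Sum>l<n. (real n * c) ^ k * c)"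
    using Suc.IH Suc.prems c \<open>0 \<le> c\<close> by (intro sum_mono mult_mono) auto
  also have "\<dots> = (real n * c) ^ Suc k" by (simp add: algebra_simps)
  finally show ?case .
qed

lemma summable_mat_exp_entry:
  fixes X :: "real mat"
  assumes X: "X \<in> carrier_mat n n" and "i < n" "j < n"
  shows "summable (\<lambda>k. norm (t ^ k / fact k * (X ^\<^sub>m k) $$ (i, j)))"
proof -
  define c where "c = (\<Sum>a<n. \<Sum>b<n. \<bar>X $$ (a, b)\<bar>)"
  have c: "\<bar>X $$ (a, b)\<bar> \<le> c" if "a < n" "b < n" for a b
  proof -
    have "\<bar>X $$ (a, b)\<bar> \<le> (\<Sum>b<n. \<bar>X $$ (a, b)\<bar>)"
      using that by (intro member_le_sum) auto
    also have "\<dots> \<le> c"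
      unfolding c_def using that
      by (intro member_le_sum[of a _ "\<lambda>a. \<Sum>b<n. \<bar>X $$ (a, b)\<bar>"]) (auto intro: sum_nonneg)
    finally show ?thesis .
  qed
  have "norm (norm (t ^ k / fact k * (X ^\<^sub>m k) $$ (i, j)))
      \<le> inverse (fact k) * (\<bar>t\<bar> * (real n * c)) ^ k" for k
  proof -
    have "norm (norm (t ^ k / fact k * (X ^\<^sub>m k) $$ (i, j)))
        = \<bar>t\<bar> ^ k / fact k * \<bar>(X ^\<^sub>m k) $$ (i, j)\<bar>"
      by (simp add: abs_mult power_abs)
    also have "\<dots> \<le> \<bar>t\<bar> ^ k / fact k * (real n * c) ^ k"
      using abs_index_pow_mat_le[OF X c assms(2,3)] by (intro mult_left_mono) auto
    finally show ?thesis by (simp add: power_mult_distrib divide_inverse mult_ac)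
  qed
  then show ?thesis
    by (intro summable_comparison_test[OF _ summable_exp[of "\<bar>t\<bar> * (real n * c)"]]) auto
qed

lemma sum_atMost_choose_Suc:
  fixes f :: "nat \<Rightarrow> real"
  shows "(\<Sum>k\<le>m. real (m choose k) * (f (Suc k) + f k)) = (\<Sum>k\<le>Suc m. real (Suc m choose k) * f k)"
proof -
  have "(\<Sum>k\<le>Suc m. real (Suc m choose k) * f k)
      = f 0 + (\<Sum>k\<le>m. real (m choose k) * f (Suc k)) + (\<Sum>k<m. real (m choose Suc k) * f (Suc k))"
    by (subst sum.atMost_Suc_shift) (simp add: sum.distrib algebra_simps lessThan_Suc_atMost[symmetric])
  moreover have "f 0 + (\<Sum>k<m. real (m choose Suc k) * f (Suc k)) = (\<Sum>k\<le>m. real (m choose k) * f k)"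
    by (simp only: lessThan_Suc_atMost[symmetric] sum.lessThan_Suc_shift) simp
  ultimately show ?thesis by (simp add: sum.distrib algebra_simps)
qed

lemma index_pow_mat_add:
  fixes X Y :: "real mat"
  assumes X: "X \<in> carrier_mat n n" and Y: "Y \<in> carrier_mat n n" and XY: "X * Y = Y * X"
    and "i < n" "j < n"
  shows "((X + Y) ^\<^sub>m m) $$ (i, j) = (\<Sum>k\<le>m. real (m choose k) * (X ^\<^sub>m k * Y ^\<^sub>m (m - k)) $$ (i, j))"
  using \<open>i < n\<close> \<open>j < n\<close>
proof (induction m arbitrary: i j)
  case 0
  then show ?case using X Y by simp
next
  case (Suc m)
  let ?T = "\<lambda>k. X ^\<^sub>m k * Y ^\<^sub>m (m - k)"
  have T: "?T k \<in> carrier_mat n n" for k using X Y by (meson mult_carrier_mat pow_carrier_mat)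
  have TX: "?T k * X = X ^\<^sub>m Suc k * Y ^\<^sub>m (Suc m - Suc k)" for k
    using assoc_mult_mat[OF pow_carrier_mat[OF X] pow_carrier_mat[OF Y] X]
      assoc_mult_mat[OF pow_carrier_mat[OF X] X pow_carrier_mat[OF Y]]
      pow_mat_commute[OF X Y XY] by simp
  have TY: "?T k * Y = X ^\<^sub>m k * Y ^\<^sub>m (Suc m - k)" if "k \<le> m" for k
    using assoc_mult_mat[OF pow_carrier_mat[OF X] pow_carrier_mat[OF Y] Y] that
    by (simp add: Suc_diff_le)
  have "((X + Y) ^\<^sub>m Suc m) $$ (i, j) = (\<Sum>l<n. ((X + Y) ^\<^sub>m m) $$ (i, l) * (X + Y) $$ (l, j))"
    using index_mult_mat_sum[of "(X + Y) ^\<^sub>m m" n "X + Y"] X Y Suc.prems by simp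
  also have "\<dots> = (\<Sum>l<n. (\<Sum>k\<le>m. real (m choose k) * ?T k $$ (i, l)) * (X $$ (l, j) + Y $$ (l, j)))"
    using Suc X Y by (intro sum.cong) auto
  also have "\<dots> = (\<Sum>k\<le>m. real (m choose k) *
      ((\<Sum>l<n. ?T k $$ (i, l) * X $$ (l, j)) + (\<Sum>l<n. ?T k $$ (i, l) * Y $$ (l, j))))"
    by (simp add: sum_distrib_right sum_distrib_left sum.distrib algebra_simps sum.swap[of _ "{..<n}"])
  also have "\<dots> = (\<Sum>k\<le>m. real (m choose k) * ((?T k * X) $$ (i, j) + (?T k * Y) $$ (i, j)))"
    using index_mult_mat_sum[OF T X Suc.prems] index_mult_mat_sum[OF T Y Suc.prems] by simp
  also have "\<dots> = (\<Sum>k\<le>m. real (m choose k) *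
      ((X ^\<^sub>m Suc k * Y ^\<^sub>m (Suc m - Suc k)) $$ (i, j) + (X ^\<^sub>m k * Y ^\<^sub>m (Suc m - k)) $$ (i, j)))"
    using TX TY by (intro sum.cong) auto
  also have "\<dots> = (\<Sum>k\<le>Suc m. real (Suc m choose k) * (X ^\<^sub>m k * Y ^\<^sub>m (Suc m - k)) $$ (i, j))"
    by (rule sum_atMost_choose_Suc)
  finally show ?case .
qed

lemma index_mat_exp:
  assumes "X \<in> carrier_mat n n" "i < n" "j < n"
  shows "mat_exp t X $$ (i, j) = (\<Sum>k. t ^ k / fact k * (X ^\<^sub>m k) $$ (i, j))"
  using assms unfolding mat_exp_def by simp

lemma mat_exp_carrier_mat[simp]: "X \<in> carrier_mat n n \<Longrightarrow> mat_exp t X \<in> carrier_mat n n"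
  unfolding mat_exp_def by simp

lemma exp_coeff_mult:
  assumes "k \<le> m"
  shows "t ^ k / fact k * (t ^ (m - k) / fact (m - k)) = t ^ m / fact m * real (m choose k)"
proof -
  have "real (m choose k) = fact m / (fact k * fact (m - k))" using binomial_fact[OF assms] by simp
  moreover have "t ^ m = t ^ k * t ^ (m - k)" using assms by (simp flip: power_add)
  ultimately show ?thesis by (simp add: field_simps)
qed

lemma mat_exp_add:
  fixes X Y :: "real mat"
  assumes X: "X \<in> carrier_mat n n" and Y: "Y \<in> carrier_mat n n" and XY: "X * Y = Y * X"
  shows "mat_exp t X * mat_exp t Y = mat_exp t (X + Y)"
proof (rule eq_matI)
  fix i j assume "i < dim_row (mat_exp t (X + Y))" "j < dim_col (mat_exp t (X + Y))"
  then have i: "i < n" and j: "j < n" using X Y by (auto simp: mat_exp_def)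
  define a where "a = (\<lambda>l k. t ^ k / fact k * (X ^\<^sub>m k) $$ (i, l))"
  define b where "b = (\<lambda>l k. t ^ k / fact k * (Y ^\<^sub>m k) $$ (l, j))"
  have sa: "summable (\<lambda>k. norm (a l k))" and sb: "summable (\<lambda>k. norm (b l k))" if "l < n" for l
    unfolding a_def b_def using summable_mat_exp_entry X Y i j that by auto
  have Cauchy_term: "(\<Sum>l<n. \<Sum>k\<le>m. a l k * b l (m - k)) = t ^ m / fact m * ((X + Y) ^\<^sub>m m) $$ (i, j)" for m
  proof -
    have "(\<Sum>l<n. a l k * b l (m - k))
        = t ^ m / fact m * (real (m choose k) * (X ^\<^sub>m k * Y ^\<^sub>m (m - k)) $$ (i, j))" if "k \<le> m" for k
    proof -
      have "(\<Sum>l<n. a l k * b l (m - k))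
          = t ^ k / fact k * (t ^ (m - k) / fact (m - k)) * (X ^\<^sub>m k * Y ^\<^sub>m (m - k)) $$ (i, j)"
        unfolding a_def b_def index_mult_mat_sum[OF pow_carrier_mat[OF X] pow_carrier_mat[OF Y] i j]
        by (simp add: sum_distrib_left algebra_simps)
      then show ?thesis by (subst (asm) exp_coeff_mult[OF that]) simp
    qed
    then have "(\<Sum>k\<le>m. \<Sum>l<n. a l k * b l (m - k))
        = t ^ m / fact m * (\<Sum>k\<le>m. real (m choose k) * (X ^\<^sub>m k * Y ^\<^sub>m (m - k)) $$ (i, j))"
      by (simp add: sum_distrib_left)
    then show ?thesis using index_pow_mat_add[OF X Y XY i j] by (simp add: sum.swap[of _ "{..<n}"])
  qed
  have "(mat_exp t X * mat_exp t Y) $$ (i, j) = (\<Sum>l<n. (\<Sum>k. a l k) * (\<Sum>k. b l k))"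
    using index_mult_mat_sum[OF mat_exp_carrier_mat[OF X] mat_exp_carrier_mat[OF Y] i j]
      index_mat_exp[OF X i] index_mat_exp[OF Y _ j] unfolding a_def b_def by simp
  also have "\<dots> = (\<Sum>l<n. \<Sum>m. \<Sum>k\<le>m. a l k * b l (m - k))"
    using Cauchy_product[OF sa sb] by simp
  also have "\<dots> = (\<Sum>m. \<Sum>l<n. \<Sum>k\<le>m. a l k * b l (m - k))"
    using summable_Cauchy_product[OF sa sb] by (intro suminf_sum[symmetric]) simp
  also have "\<dots> = mat_exp t (X + Y) $$ (i, j)"
    unfolding Cauchy_term using index_mat_exp[of "X + Y" n, OF _ i j] X Y by simp
  finally show "(mat_exp t X * mat_exp t Y) $$ (i, j) = mat_exp t (X + Y) $$ (i, j)" .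
qed (use X Y in \<open>auto simp: mat_exp_def\<close>)

lemma pow_smult_one_mat: "(d \<cdot>\<^sub>m 1\<^sub>m n) ^\<^sub>m k = (d ^ k :: 'a :: comm_ring_1) \<cdot>\<^sub>m 1\<^sub>m n"
  by (induction k) (auto intro!: eq_matI)

lemma exp_series_mult: "(\<Sum>k. t ^ k * d ^ k / fact k) = exp (t * d :: real)"
proof -
  have "(\<lambda>k. t ^ k * d ^ k / fact k) sums exp (t * d)"
    using exp_converges[of "t * d"] by (simp add: power_mult_distrib divide_inverse mult_ac)
  then show ?thesis by (rule sums_unique[symmetric])
qed

lemma mat_exp_smult_one_mat: "mat_exp t (d \<cdot>\<^sub>m 1\<^sub>m n) = exp (t * d) \<cdot>\<^sub>m 1\<^sub>m n"
  by (rule eq_matI) (auto simp: mat_exp_def pow_smult_one_mat exp_series_mult)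

lemma mat_exp_zero_mat: "mat_exp t (0\<^sub>m n n) = 1\<^sub>m n"
proof -
  have "0\<^sub>m n n = 0 \<cdot>\<^sub>m (1\<^sub>m n :: real mat)" by (rule eq_matI) auto
  then have "mat_exp t (0\<^sub>m n n) = 1 \<cdot>\<^sub>m 1\<^sub>m n" by (simp add: mat_exp_smult_one_mat)
  also have "\<dots> = 1\<^sub>m n" by (rule eq_matI) auto
  finally show ?thesis .
qed

lemma mat_exp_uminus_inverse:
  assumes X: "X \<in> carrier_mat n n"
  shows "mat_exp t X * mat_exp t (- X) = 1\<^sub>m n" and "mat_exp t (- X) * mat_exp t X = 1\<^sub>m n"
proof -
  have "X * - X = - X * X" using X by simp
  then have "mat_exp t X * mat_exp t (- X) = mat_exp t (X + - X)"
    and "mat_exp t (- X) * mat_exp t X = mat_exp t (- X + X)"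
    using X mat_exp_add[of X n "- X"] mat_exp_add[of "- X" n X] by simp_all
  moreover have "X + - X = 0\<^sub>m n n" and "- X + X = 0\<^sub>m n n"
    using X by (auto intro: eq_matI)
  ultimately show "mat_exp t X * mat_exp t (- X) = 1\<^sub>m n" and "mat_exp t (- X) * mat_exp t X = 1\<^sub>m n"
    by (simp_all add: mat_exp_zero_mat)
qed

lemma invertible_mat_exp:
  assumes X: "X \<in> carrier_mat n n"
  shows "invertible_mat (mat_exp t X)"
proof -
  have "inverts_mat (mat_exp t X) (mat_exp t (- X))" and "inverts_mat (mat_exp t (- X)) (mat_exp t X)"
    unfolding inverts_mat_def using mat_exp_uminus_inverse[OF X] X by (simp_all add: mat_exp_def)
  moreover have "square_mat (mat_exp t X)" using X by (simp add: mat_exp_def)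
  ultimately show ?thesis unfolding invertible_mat_def by blast
qed

lemma transpose_pow_mat:
  fixes X :: "'a :: comm_ring_1 mat"
  assumes X: "X \<in> carrier_mat n n"
  shows "transpose_mat (X ^\<^sub>m k) = transpose_mat X ^\<^sub>m k"
proof (induction k)
  case 0
  then show ?case using X by simp
next
  case (Suc k)
  have XT: "transpose_mat X \<in> carrier_mat n n" using X by simp
  have "transpose_mat (X ^\<^sub>m Suc k) = transpose_mat X * transpose_mat X ^\<^sub>m k"
    using transpose_mult[OF pow_carrier_mat[OF X] X] Suc by simp
  then show ?case using pow_mat_commute[OF XT XT refl] by simp
qed

lemma transpose_mat_exp:
  assumes X: "X \<in> carrier_mat n n"
  shows "transpose_mat (mat_exp t X) = mat_exp t (transpose_mat X)"
proof (rule eq_matI)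
  fix i j assume "i < dim_row (mat_exp t (transpose_mat X))" "j < dim_col (mat_exp t (transpose_mat X))"
  then have i: "i < n" and j: "j < n" using X by (auto simp: mat_exp_def)
  have "(X ^\<^sub>m k) $$ (j, i) = (transpose_mat X ^\<^sub>m k) $$ (i, j)" for k
    using transpose_pow_mat[OF X, of k] index_transpose_mat(1)[of i "X ^\<^sub>m k" j] i j X by simp
  moreover have "transpose_mat (mat_exp t X) $$ (i, j) = mat_exp t X $$ (j, i)"
    using i j X by (simp add: mat_exp_def)
  ultimately show "transpose_mat (mat_exp t X) $$ (i, j) = mat_exp t (transpose_mat X) $$ (i, j)"
    using i j X by (simp add: index_mat_exp)
qed (use X in \<open>auto simp: mat_exp_def\<close>)

section \<open>Block vectors and the cones\<close>

definition block_vec :: "nat \<Rightarrow> nat \<Rightarrow> (nat \<Rightarrow> real) \<Rightarrow> (nat \<Rightarrow> real) \<Rightarrow> real vec" where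
  "block_vec p q f g = vec (p + q) (\<lambda>i. if i < p then f i else g (i - p))"

lemma block_vec_carrier[simp]: "block_vec p q f g \<in> carrier_vec (p + q)"
  and dim_block_vec[simp]: "dim_vec (block_vec p q f g) = p + q"
  unfolding block_vec_def by auto

lemma index_block_vec[simp]:
  "i < p \<Longrightarrow> block_vec p q f g $ i = f i"
  "j < q \<Longrightarrow> block_vec p q f g $ (p + j) = g j"
  unfolding block_vec_def by simp_all

lemma unorm_block_vec: "unorm p q (block_vec p q f g) = L2_set g {..<q}"
  unfolding unorm_def L2_set_def by simp

lemma block_vec_in_M_cone_iff:
  "block_vec p q f g \<in> M_cone p q \<longleftrightarrow> L2_set g {..<q} \<le> (\<Sum>i<p. f i) \<and> (\<forall>i<p. 0 \<le> f i)"
  unfolding M_cone_def by (simp add: unorm_block_vec)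

lemma block_vec_in_L_cone_iff:
  "block_vec p q f g \<in> L_cone p q \<longleftrightarrow> (\<forall>i<p. L2_set g {..<q} \<le> f i)"
  unfolding L_cone_def by (simp add: unorm_block_vec)

lemma scalar_prod_split:
  assumes "v \<in> carrier_vec (p + q)" "w \<in> carrier_vec (p + q)"
  shows "v \<bullet> w = (\<Sum>i<p. v $ i * w $ i) + (\<Sum>j<q. v $ (p + j) * w $ (p + j))"
  using assms by (simp add: scalar_prod_def atLeast0LessThan sum_lessThan_add)

lemma index_mult_mat_vec_block_vec:
  assumes A: "A \<in> carrier_mat (p + q) (p + q)" and r: "r < p + q"
  shows "(A *\<^sub>v block_vec p q f g) $ r = (\<Sum>c<p. A $$ (r, c) * f c) + (\<Sum>m<q. A $$ (r, p + m) * g m)"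
  using A r by (simp add: scalar_prod_split[of _ p q])

lemma L_cone_subset_dual_M_cone: "L_cone p q \<subseteq> dual_cone (p + q) (M_cone p q)"
proof
  fix s assume "s \<in> L_cone p q"
  then have s: "s \<in> carrier_vec (p + q)" and s_ge: "\<forall>k<p. unorm p q s \<le> s $ k"
    unfolding L_cone_def by auto
  have "0 \<le> x \<bullet> s" if x: "x \<in> M_cone p q" for x
  proof -
    have xc: "x \<in> carrier_vec (p + q)" and x_sum: "unorm p q x \<le> (\<Sum>i<p. x $ i)"
      and x_nonneg: "\<forall>i<p. 0 \<le> x $ i"
      using x unfolding M_cone_def by auto
    have "unorm p q x * unorm p q s \<le> (\<Sum>i<p. x $ i) * unorm p q s"
      using x_sum by (intro mult_right_mono) (auto simp: unorm_def intro: sum_nonneg)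
    also have "\<dots> = (\<Sum>i<p. x $ i * unorm p q s)" by (simp add: sum_distrib_right)
    also have "\<dots> \<le> (\<Sum>i<p. x $ i * s $ i)"
      using x_nonneg s_ge by (intro sum_mono mult_left_mono) auto
    finally have "unorm p q x * unorm p q s \<le> (\<Sum>i<p. x $ i * s $ i)" .
    moreover have "- (unorm p q x * unorm p q s) \<le> (\<Sum>j<q. x $ (p + j) * s $ (p + j))"
      using sum_mult_ge_neg_L2_set[of "\<lambda>j. x $ (p + j)" "{..<q}" "\<lambda>j. s $ (p + j)"]
      by (simp add: unorm_def L2_set_def)
    ultimately show ?thesis using scalar_prod_split[OF xc s] by linarith
  qed
  then show "s \<in> dual_cone (p + q) (M_cone p q)" unfolding dual_cone_def using s by blast
qed

lemma positive_operatorD: "positive_operator A K \<Longrightarrow> x \<in> K \<Longrightarrow> A *\<^sub>v x \<in> K"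
  unfolding positive_operator_def by auto

lemma positive_operator_row_in_L_cone:
  assumes A: "A \<in> carrier_mat (p + q) (p + q)" and P: "positive_operator A (M_cone p q)"
    and i: "i < p"
  shows "row A i \<in> L_cone p q"
proof -
  define N where "N = L2_set (\<lambda>m. A $$ (i, p + m)) {..<q}"
  \<comment> \<open>Test vector \<open>(e\<^sub>k, -u / N)\<close> with \<open>u\<close> the \<open>u\<close>-part of row \<open>i\<close>; if \<open>N = 0\<close> it is \<open>e\<^sub>k\<close>, as \<open>x / 0 = 0\<close>.\<close>
  define g where "g m = - A $$ (i, p + m) / N" for m
  have NN: "N\<^sup>2 = (\<Sum>m<q. (A $$ (i, p + m))\<^sup>2)" unfolding N_def L2_set_def by (simp add: sum_nonneg)
  have "(\<Sum>m<q. (g m)\<^sup>2) = N\<^sup>2 / N\<^sup>2"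
    unfolding g_def power_divide sum_divide_distrib[symmetric] NN by simp
  then have "L2_set g {..<q} \<le> 1" unfolding L2_set_def by (cases "N = 0") auto
  have "(\<Sum>m<q. A $$ (i, p + m) * g m) = - N\<^sup>2 / N"
    unfolding g_def NN by (simp add: sum_divide_distrib sum_negf power2_eq_square)
  then have g_sum: "(\<Sum>m<q. A $$ (i, p + m) * g m) = - N" by (simp add: power2_eq_square)
  have "N \<le> row A i $ k" if k: "k < p" for k
  proof -
    have "block_vec p q (\<lambda>c. if c = k then 1 else 0) g \<in> M_cone p q"
      using k \<open>L2_set g {..<q} \<le> 1\<close> by (simp add: block_vec_in_M_cone_iff)
    then have "0 \<le> (A *\<^sub>v block_vec p q (\<lambda>c. if c = k then 1 else 0) g) $ i"
      using positive_operatorD[OF P] i unfolding M_cone_def by blast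
    then show ?thesis using index_mult_mat_vec_block_vec[OF A] i k A g_sum by simp
  qed
  moreover have "unorm p q (row A i) = N" unfolding unorm_def N_def L2_set_def using A i by simp
  moreover have "row A i \<in> carrier_vec (p + q)" using A i by (intro row_carrier_vec) auto
  ultimately show ?thesis unfolding L_cone_def by simp
qed

lemma positive_operator_col_combination_in_M_cone:
  assumes A: "A \<in> carrier_mat (p + q) (p + q)" and P: "positive_operator A (M_cone p q)"
    and i: "i < p" and g: "L2_set g {..<q} \<le> 1"
  shows "vec (p + q) (\<lambda>k. col A i $ k + (\<Sum>j<q. g j * col A (p + j) $ k)) \<in> M_cone p q"
proof -
  have "vec (p + q) (\<lambda>k. col A i $ k + (\<Sum>j<q. g j * col A (p + j) $ k))
      = A *\<^sub>v block_vec p q (\<lambda>c. if c = i then 1 else 0) g"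
    using A i by (intro eq_vecI) (auto simp: index_mult_mat_vec_block_vec mult.commute simp del: index_mult_mat_vec)
  also have "\<dots> \<in> M_cone p q"
    using i g by (intro positive_operatorD[OF P]) (simp add: block_vec_in_M_cone_iff)
  finally show ?thesis .
qed

section \<open>Lyapunov-like operators\<close>

lemma lyapunov_like_block_vec:
  assumes L: "lyapunov_like (p + q) A (M_cone p q)" and A: "A \<in> carrier_mat (p + q) (p + q)"
    and x: "block_vec p q f g \<in> M_cone p q"
    and s: "\<forall>k<p. L2_set v {..<q} \<le> y k"
    and compl: "(\<Sum>i<p. f i * y i) + (\<Sum>j<q. g j * v j) = 0"
  shows "(\<Sum>r<p. (A *\<^sub>v block_vec p q f g) $ r * y r)
    + (\<Sum>j<q. (A *\<^sub>v block_vec p q f g) $ (p + j) * v j) = 0"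
proof -
  have "block_vec p q y v \<in> dual_cone (p + q) (M_cone p q)"
    using L_cone_subset_dual_M_cone[of p q] s by (auto simp: block_vec_in_L_cone_iff)
  moreover have "block_vec p q f g \<bullet> block_vec p q y v = 0"
    using compl by (simp add: scalar_prod_split[of _ p q])
  ultimately have "(A *\<^sub>v block_vec p q f g) \<bullet> block_vec p q y v = 0"
    using L x unfolding lyapunov_like_def compl_set_def by auto
  then show ?thesis using A by (simp add: scalar_prod_split[of _ p q] del: index_mult_mat_vec)
qed

context
  fixes p q :: nat and A :: "real mat"
  assumes lyap: "lyapunov_like (p + q) A (M_cone p q)"
    and A: "A \<in> carrier_mat (p + q) (p + q)"
begin

lemma lyapunov_like_upper_left_offdiag:
  assumes "i < p" "k < p" "i \<noteq> k"
  shows "A $$ (k, i) = 0"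
  using lyapunov_like_block_vec[OF lyap A,
      of "\<lambda>c. if c = i then 1 else 0" "\<lambda>_. 0" "\<lambda>_. 0" "\<lambda>c. if c = k then 1 else 0"] assms
  by (simp add: block_vec_in_M_cone_iff L2_set_def index_mult_mat_vec_block_vec[OF A] del: index_mult_mat_vec)

text \<open>The complementary pair \<open>x = (e\<^sub>i, e f\<^sub>j)\<close>, \<open>s = (y, -e f\<^sub>j)\<close>, where \<open>e = \<plusminus>1\<close>.\<close>

lemma lyapunov_like_test:
  assumes i: "i < p" and j: "j < q" and e: "e\<^sup>2 = 1"
    and y: "\<forall>r<p. 1 \<le> y r" "y i = 1"
  shows "(\<Sum>r<p. (A $$ (r, i) + A $$ (r, p + j) * e) * y r) = (A $$ (p + j, i) + A $$ (p + j, p + j) * e) * e"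
proof -
  have norm_e: "L2_set (\<lambda>m. if m = j then c else 0) {..<q} = 1" if "c\<^sup>2 = 1" for c
    using j that by (simp add: L2_set_def)
  have "(\<Sum>r<p. (A *\<^sub>v block_vec p q (\<lambda>c. if c = i then 1 else 0) (\<lambda>m. if m = j then e else 0)) $ r * y r)
      + (\<Sum>m<q. (A *\<^sub>v block_vec p q (\<lambda>c. if c = i then 1 else 0) (\<lambda>m. if m = j then e else 0)) $ (p + m)
          * (if m = j then - e else 0)) = 0"
    using i j e y norm_e[of e] norm_e[of "- e"]
    by (intro lyapunov_like_block_vec[OF lyap A]) (auto simp: block_vec_in_M_cone_iff power2_eq_square)
  then show ?thesis
    using i j by (simp add: index_mult_mat_vec_block_vec[OF A] del: index_mult_mat_vec)
qed

lemma lyapunov_like_upper_right: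
  assumes p: "1 < p" and k: "k < p" and j: "j < q"
  shows "A $$ (k, p + j) = 0"
proof -
  obtain i where i: "i < p" "i \<noteq> k"
    using p by (cases "k = 0") (auto intro: exI[of _ "0 :: nat"] exI[of _ "1 :: nat"])
  let ?X = "\<lambda>r. A $$ (r, i) + A $$ (r, p + j)"
  \<comment> \<open>The tests with \<open>y = 1\<close> and \<open>y = 1 + e\<^sub>k\<close> differ by the \<open>k\<close>-th entry of \<open>A x\<close>.\<close>
  have "(\<Sum>r<p. ?X r * (1 + (if r = k then 1 else 0))) = (\<Sum>r<p. ?X r * 1)"
    using lyapunov_like_test[OF i(1) j, of 1 "\<lambda>r. 1 + (if r = k then 1 else 0)"]
      lyapunov_like_test[OF i(1) j, of 1 "\<lambda>_. 1"] i by simp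
  then have "?X k = 0" using k by (simp add: distrib_left sum.distrib)
  then show ?thesis using lyapunov_like_upper_left_offdiag[OF i(1) k i(2)] by simp
qed

lemma lyapunov_like_lower_left:
  assumes p: "1 < p" and i: "i < p" and j: "j < q"
  shows "A $$ (p + j, i) = 0" and "A $$ (p + j, p + j) = A $$ (i, i)"
proof -
  have col_sum: "(\<Sum>r<p. (A $$ (r, i) + A $$ (r, p + j) * e) * 1) = A $$ (i, i)" for e
  proof -
    have "(\<Sum>r<p. (A $$ (r, i) + A $$ (r, p + j) * e) * 1) = (\<Sum>r<p. if r = i then A $$ (i, i) else 0)"
      using lyapunov_like_upper_left_offdiag[OF i] lyapunov_like_upper_right[OF p _ j]
      by (intro sum.cong) auto
    then show ?thesis using i by simp
  qed
  have "A $$ (i, i) = A $$ (p + j, i) + A $$ (p + j, p + j)"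
    using lyapunov_like_test[OF i j, of 1 "\<lambda>_. 1"] col_sum[of 1] by simp
  moreover have "A $$ (i, i) = - A $$ (p + j, i) + A $$ (p + j, p + j)"
    using lyapunov_like_test[OF i j, of "- 1" "\<lambda>_. 1"] col_sum[of "- 1"] by simp
  ultimately show "A $$ (p + j, i) = 0" and "A $$ (p + j, p + j) = A $$ (i, i)" by linarith+
qed

lemma lyapunov_like_lower_right_skew:
  assumes p: "1 < p" and j: "j < q" and l: "l < q" and jl: "j \<noteq> l"
  shows "A $$ (p + j, p + l) + A $$ (p + l, p + j) = 0"
proof -
  have p0: "0 < p" using p by simp
  define f where "f c = (if c = 0 then sqrt 2 else 0)" for c :: nat
  define g where "g m = (if m = j then 1 else 0) + (if m = l then 1 else (0::real))" for m
  have g2: "(\<Sum>m<q. (g m)\<^sup>2) = 2"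
  proof -
    have "(\<Sum>m<q. (g m)\<^sup>2) = (\<Sum>m<q. (if m = j then 1 else 0) + (if m = l then 1 else (0::real)))"
      unfolding g_def using jl by (intro sum.cong) auto
    then show ?thesis using j l by (simp add: sum.distrib)
  qed
  have mult_g: "(\<Sum>m<q. X m * g m) = X j + X l" for X :: "nat \<Rightarrow> real"
    using j l by (simp add: g_def distrib_left sum.distrib)
  let ?x = "block_vec p q f g"
  have Ax: "(A *\<^sub>v ?x) $ r = A $$ (r, 0) * sqrt 2 + A $$ (r, p + j) + A $$ (r, p + l)" if "r < p + q" for r
    using that p0 mult_g by (simp add: index_mult_mat_vec_block_vec[OF A] f_def del: index_mult_mat_vec)
  have "(\<Sum>r<p. (A *\<^sub>v ?x) $ r * sqrt 2) + (\<Sum>m<q. (A *\<^sub>v ?x) $ (p + m) * - g m) = 0"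
  proof (rule lyapunov_like_block_vec[OF lyap A])
    show "?x \<in> M_cone p q" using p0 g2 by (simp add: block_vec_in_M_cone_iff L2_set_def f_def)
    show "\<forall>k<p. L2_set (\<lambda>m. - g m) {..<q} \<le> sqrt 2" using g2 by (simp add: L2_set_def)
    show "(\<Sum>i<p. f i * sqrt 2) + (\<Sum>m<q. g m * - g m) = 0"
      using p0 g2 by (simp add: f_def sum_negf power2_eq_square)
  qed
  moreover have "(\<Sum>r<p. (A *\<^sub>v ?x) $ r * sqrt 2) = 2 * A $$ (0, 0)"
  proof -
    have "(\<Sum>r<p. (A *\<^sub>v ?x) $ r * sqrt 2) = (\<Sum>r<p. if r = 0 then 2 * A $$ (0, 0) else 0)"
      using Ax lyapunov_like_upper_left_offdiag[OF p0] lyapunov_like_upper_right[OF p _ j]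
        lyapunov_like_upper_right[OF p _ l]
      by (intro sum.cong) auto
    then show ?thesis using p0 by simp
  qed
  moreover have "(\<Sum>m<q. (A *\<^sub>v ?x) $ (p + m) * - g m) = - ((A *\<^sub>v ?x) $ (p + j) + (A *\<^sub>v ?x) $ (p + l))"
    using mult_g[of "\<lambda>m. - (A *\<^sub>v ?x) $ (p + m)"] by (simp add: sum_negf)
  moreover have "(A *\<^sub>v ?x) $ (p + j) = A $$ (0, 0) + A $$ (p + j, p + l)"
    and "(A *\<^sub>v ?x) $ (p + l) = A $$ (p + l, p + j) + A $$ (0, 0)"
    using Ax j l lyapunov_like_lower_left[OF p p0] by simp_all
  ultimately show ?thesis by simp
qed

end

text \<open>In block form \<open>A = diag(a I, a I + S)\<close> with \<open>S\<close> skew-symmetric.\<close>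

definition lyapunov_form :: "nat \<Rightarrow> nat \<Rightarrow> real \<Rightarrow> real mat \<Rightarrow> bool" where
  "lyapunov_form p q a A \<longleftrightarrow> A \<in> carrier_mat (p + q) (p + q)
     \<and> (\<forall>k<p. \<forall>c<p + q. A $$ (k, c) = (if c = k then a else 0))
     \<and> transpose_mat A + A = (2 * a) \<cdot>\<^sub>m 1\<^sub>m (p + q)"

lemma lyapunov_like_imp_lyapunov_form:
  assumes lyap: "lyapunov_like (p + q) A (M_cone p q)" and A: "A \<in> carrier_mat (p + q) (p + q)"
    and p: "1 < p" and q: "0 < q"
  shows "lyapunov_form p q (A $$ (0, 0)) A"
proof -
  note upper_left = lyapunov_like_upper_left_offdiag[OF lyap A]
    and upper_right = lyapunov_like_upper_right[OF lyap A p]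
    and lower_left = lyapunov_like_lower_left[OF lyap A p]
    and lower_right = lyapunov_like_lower_right_skew[OF lyap A p]
  have p0: "0 < p" using p by simp
  have diag_lower: "A $$ (p + m, p + m) = A $$ (0, 0)" if "m < q" for m
    using lower_left(2)[OF p0 that] .
  have diag_upper: "A $$ (k, k) = A $$ (0, 0)" if "k < p" for k
  proof -
    have "A $$ (k, k) = A $$ (p + 0, p + 0)" using lower_left(2)[OF that q] by (rule sym)
    also have "\<dots> = A $$ (0, 0)" by (rule diag_lower[OF q])
    finally show ?thesis .
  qed
  have upper_rows: "A $$ (k, c) = (if c = k then A $$ (0, 0) else 0)" if k: "k < p" and c: "c < p + q" for k c
    using c
  proof (cases rule: less_add_cases)
    case 1
    then show ?thesis using upper_left[OF 1 k] diag_upper[OF k] by (cases "c = k") simp_all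
  next
    case (2 m)
    then show ?thesis using upper_right[OF k \<open>m < q\<close>] k by simp
  qed
  have skew: "A $$ (j, i) + A $$ (i, j) = (if i = j then 2 * A $$ (0, 0) else 0)"
    if i: "i < p + q" and j: "j < p + q" for i j
    using i
  proof (cases rule: less_add_cases)
    case 1
    show ?thesis using j
    proof (cases rule: less_add_cases)
      case 2: 1
      then show ?thesis using upper_rows[OF \<open>i < p\<close> j] upper_rows[OF 2 i] by auto
    next
      case (2 m)
      then show ?thesis using upper_rows[OF \<open>i < p\<close> j] lower_left(1)[OF \<open>i < p\<close> \<open>m < q\<close>] \<open>i < p\<close> by simp
    qed
  next
    case (2 m)
    show ?thesis using j
    proof (cases rule: less_add_cases)
      case 1
      then show ?thesis using \<open>i = p + m\<close> upper_rows[OF 1 i] lower_left(1)[OF 1 \<open>m < q\<close>] by simp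
    next
      case (2 l)
      then show ?thesis using \<open>i = p + m\<close> \<open>m < q\<close> lower_right[of l m] diag_lower[of m]
        by (cases "m = l") simp_all
    qed
  qed
  have "transpose_mat A + A = (2 * A $$ (0, 0)) \<cdot>\<^sub>m 1\<^sub>m (p + q)"
    by (rule eq_matI) (use A skew in auto)
  then show ?thesis unfolding lyapunov_form_def using A upper_rows by blast
qed

section \<open>Exponentials of Lyapunov-like operators\<close>

lemma lyapunov_form_carrier: "lyapunov_form p q a A \<Longrightarrow> A \<in> carrier_mat (p + q) (p + q)"
  unfolding lyapunov_form_def by blast

lemma lyapunov_form_uminus:
  assumes "lyapunov_form p q a A"
  shows "lyapunov_form p q (- a) (- A)"
proof -
  have A: "A \<in> carrier_mat (p + q) (p + q)"
    and sym: "transpose_mat A + A = (2 * a) \<cdot>\<^sub>m 1\<^sub>m (p + q)"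
    using assms unfolding lyapunov_form_def by blast+
  have "(transpose_mat (- A) + - A) $$ (i, j) = - ((transpose_mat A + A) $$ (i, j))"
    if "i < p + q" "j < p + q" for i j
    using A that by simp
  then have "transpose_mat (- A) + - A = (2 * - a) \<cdot>\<^sub>m 1\<^sub>m (p + q)"
    using A unfolding sym by (intro eq_matI) auto
  then show ?thesis using assms A unfolding lyapunov_form_def by auto
qed

lemma lyapunov_form_pow_upper_rows:
  assumes A: "lyapunov_form p q a A" and k: "k < p" and c: "c < p + q"
  shows "(A ^\<^sub>m m) $$ (k, c) = (if c = k then a ^ m else 0)"
  using c
proof (induction m arbitrary: c)
  case 0
  then show ?case using k lyapunov_form_carrier[OF A] by simp
next
  case (Suc m)
  note carrier = lyapunov_form_carrier[OF A]
  have "(A ^\<^sub>m Suc m) $$ (k, c) = (\<Sum>l<p + q. (A ^\<^sub>m m) $$ (k, l) * A $$ (l, c))"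
    using index_mult_mat_sum[OF pow_carrier_mat[OF carrier] carrier _ Suc.prems] k by simp
  also have "\<dots> = a ^ m * A $$ (k, c)" using Suc.IH k by simp
  finally show ?case using A k Suc.prems unfolding lyapunov_form_def by simp
qed

lemma lyapunov_form_exp_upper_rows:
  assumes A: "lyapunov_form p q a A" and k: "k < p" and c: "c < p + q"
  shows "mat_exp t A $$ (k, c) = (if c = k then exp (t * a) else 0)"
  using index_mat_exp[OF lyapunov_form_carrier[OF A] _ c, of k] k
    lyapunov_form_pow_upper_rows[OF A k c] exp_series_mult by simp

lemma lyapunov_form_transpose_commute:
  assumes "lyapunov_form p q a A"
  shows "transpose_mat A * A = A * transpose_mat A"
proof -
  let ?n = "p + q" and ?S = "(2 * a) \<cdot>\<^sub>m 1\<^sub>m (p + q)"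
  have A: "A \<in> carrier_mat ?n ?n" and sym: "transpose_mat A + A = ?S"
    using assms unfolding lyapunov_form_def by blast+
  have S: "?S \<in> carrier_mat ?n ?n" by simp
  have T: "transpose_mat A = ?S - A"
    using A by (intro eq_matI) (auto simp flip: sym)
  have "(?S - A) * A = (2 * a) \<cdot>\<^sub>m A - A * A"
    using A by (simp add: minus_mult_distrib_mat[OF S A A] mult_smult_assoc_mat[of _ ?n ?n])
  also have "\<dots> = A * (?S - A)"
    using A by (simp add: mult_minus_distrib_mat[OF A S A] mult_smult_distrib[OF A one_carrier_mat])
  finally show ?thesis unfolding T .
qed

lemma lyapunov_form_exp_transpose_mult:
  assumes "lyapunov_form p q a A"
  shows "transpose_mat (mat_exp t A) * mat_exp t A = exp (t * (2 * a)) \<cdot>\<^sub>m 1\<^sub>m (p + q)"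
proof -
  have A: "A \<in> carrier_mat (p + q) (p + q)" and sym: "transpose_mat A + A = (2 * a) \<cdot>\<^sub>m 1\<^sub>m (p + q)"
    using assms unfolding lyapunov_form_def by blast+
  have "transpose_mat (mat_exp t A) * mat_exp t A = mat_exp t (transpose_mat A) * mat_exp t A"
    using transpose_mat_exp[OF A] by simp
  also have "\<dots> = mat_exp t (transpose_mat A + A)"
    using A lyapunov_form_transpose_commute[OF assms] by (intro mat_exp_add) auto
  finally show ?thesis unfolding sym mat_exp_smult_one_mat .
qed

lemma lyapunov_form_exp_norm:
  assumes A: "lyapunov_form p q a A" and v: "v \<in> carrier_vec (p + q)"
  shows "(mat_exp t A *\<^sub>v v) \<bullet> (mat_exp t A *\<^sub>v v) = exp (t * a) ^ 2 * (v \<bullet> v)"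
proof -
  let ?B = "mat_exp t A"
  have B: "?B \<in> carrier_mat (p + q) (p + q)" using lyapunov_form_carrier[OF A] by simp
  have "(?B *\<^sub>v v) \<bullet> (?B *\<^sub>v v) = (transpose_mat ?B *\<^sub>v (?B *\<^sub>v v)) \<bullet> v"
    using transpose_vec_mult_scalar[OF B v] B v by simp
  also have "\<dots> = ((transpose_mat ?B * ?B) *\<^sub>v v) \<bullet> v"
    using B v by simp
  also have "\<dots> = exp (t * (2 * a)) * (v \<bullet> v)"
    using v unfolding lyapunov_form_exp_transpose_mult[OF A] by (simp add: smult_one_mat_mult_mat_vec)
  finally show ?thesis by (simp add: power2_eq_square flip: exp_add)
qed

lemma lyapunov_form_exp_M_cone:
  assumes A: "lyapunov_form p q a A" and v: "v \<in> M_cone p q"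
  shows "mat_exp t A *\<^sub>v v \<in> M_cone p q"
proof -
  let ?w = "mat_exp t A *\<^sub>v v" and ?E = "exp (t * a)"
  have vc: "v \<in> carrier_vec (p + q)" using v unfolding M_cone_def by blast
  have B: "mat_exp t A \<in> carrier_mat (p + q) (p + q)" using lyapunov_form_carrier[OF A] by simp
  have wc: "?w \<in> carrier_vec (p + q)" using B vc by simp
  have w_upper: "?w $ k = ?E * v $ k" if k: "k < p" for k
  proof -
    have "?w $ k = (\<Sum>c<p + q. mat_exp t A $$ (k, c) * v $ c)"
      using B vc k by (auto simp: scalar_prod_def atLeast0LessThan intro!: sum.cong)
    also have "\<dots> = (\<Sum>c<p + q. (if c = k then ?E else 0) * v $ c)"
      using lyapunov_form_exp_upper_rows[OF A k] by (intro sum.cong) auto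
    finally show ?thesis using k by simp
  qed
  have sq_sum: "u \<bullet> u = (\<Sum>i<p. (u $ i)\<^sup>2) + (\<Sum>j<q. (u $ (p + j))\<^sup>2)" if "u \<in> carrier_vec (p + q)" for u :: "real vec"
    unfolding power2_eq_square by (rule scalar_prod_split[OF that that])
  have "(\<Sum>i<p. (?w $ i)\<^sup>2) = ?E\<^sup>2 * (\<Sum>i<p. (v $ i)\<^sup>2)"
    using w_upper by (simp add: sum_distrib_left power_mult_distrib)
  then have "(\<Sum>j<q. (?w $ (p + j))\<^sup>2) = ?E\<^sup>2 * (\<Sum>j<q. (v $ (p + j))\<^sup>2)"
    using lyapunov_form_exp_norm[OF A vc, of t] sq_sum[OF wc] sq_sum[OF vc] by (simp add: algebra_simps)
  then have "unorm p q ?w = ?E * unorm p q v"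
    unfolding unorm_def by (simp add: real_sqrt_mult)
  moreover have "(\<Sum>i<p. ?w $ i) = ?E * (\<Sum>i<p. v $ i)"
    using w_upper by (simp add: sum_distrib_left)
  ultimately show ?thesis
    using v wc w_upper unfolding M_cone_def by auto
qed

lemma lyapunov_form_exp_Aut:
  assumes A: "lyapunov_form p q a A"
  shows "mat_exp t A \<in> Aut (p + q) (M_cone p q)"
proof -
  have carrier: "A \<in> carrier_mat (p + q) (p + q)" by (rule lyapunov_form_carrier[OF A])
  have "v \<in> (\<lambda>x. mat_exp t A *\<^sub>v x) ` M_cone p q" if v: "v \<in> M_cone p q" for v
  proof
    have "v \<in> carrier_vec (p + q)" using v unfolding M_cone_def by blast
    then show "v = mat_exp t A *\<^sub>v (mat_exp t (- A) *\<^sub>v v)"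
      using carrier mat_exp_uminus_inverse(1)[OF carrier]
      by (simp add: assoc_mult_mat_vec[of _ "p + q" "p + q" _ "p + q", symmetric])
    show "mat_exp t (- A) *\<^sub>v v \<in> M_cone p q"
      by (rule lyapunov_form_exp_M_cone[OF lyapunov_form_uminus[OF A] v])
  qed
  then show ?thesis
    unfolding Aut_def using carrier invertible_mat_exp[OF carrier] lyapunov_form_exp_M_cone[OF A] by auto
qed

theorem mainTheorem2:
  fixes p q :: nat and A :: "real mat"
  assumes "p > 1" and "q > 0"
    and "A \<in> carrier_mat (p + q) (p + q)"
    and "positive_operator A (M_cone p q)"
  shows "(\<forall>i<p. row A i \<in> L_cone p q)
    \<and> (\<forall>i<p. col A i \<in> M_cone p q)
    \<and> (\<forall>i<p. \<forall>u \<in> carrier_vec q. vnorm u = 1 \<longrightarrow>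
          vec (p + q) (\<lambda>k. col A i $ k + (\<Sum>j<q. u $ j * col A (p + j) $ k)) \<in> M_cone p q)
    \<and> (\<forall>i<p. \<forall>j<q. col A i + col A (p + j) \<in> M_cone p q)
    \<and> (lyapunov_like (p + q) A (M_cone p q) \<longrightarrow>
          (\<forall>t::real. mat_exp t A \<in> Aut (p + q) (M_cone p q)
                     \<and> positive_operator (mat_exp t A) (M_cone p q)))"
proof (intro conjI allI impI ballI)
  note A = assms(3) and P = assms(4)
  note combination = positive_operator_col_combination_in_M_cone[OF A P]
  fix i assume i: "i < p"
  show "row A i \<in> L_cone p q" by (rule positive_operator_row_in_L_cone[OF A P i])
  have "col A i = vec (p + q) (\<lambda>k. col A i $ k + (\<Sum>j<q. 0 * col A (p + j) $ k))"
    using A by (intro eq_vecI) auto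
  then show "col A i \<in> M_cone p q" using combination[OF i, of "\<lambda>_. 0"] by (simp add: L2_set_def)
  fix u :: "real vec" assume "u \<in> carrier_vec q" "vnorm u = 1"
  then show "vec (p + q) (\<lambda>k. col A i $ k + (\<Sum>j<q. u $ j * col A (p + j) $ k)) \<in> M_cone p q"
    by (intro combination[OF i]) (simp add: vnorm_def L2_set_def)
next
  fix i j assume ij: "i < p" "j < q"
  have "col A i + col A (p + j) = vec (p + q) (\<lambda>k. col A i $ k + col A (p + j) $ k)"
    using assms(3) ij by (intro eq_vecI) auto
  then show "col A i + col A (p + j) \<in> M_cone p q"
    using positive_operator_col_combination_in_M_cone[OF assms(3,4), of i "\<lambda>m. if m = j then 1 else 0"]
      ij by (simp add: L2_set_def)
next
  fix t :: real assume "lyapunov_like (p + q) A (M_cone p q)"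
  then have B: "mat_exp t A \<in> Aut (p + q) (M_cone p q)"
    using lyapunov_like_imp_lyapunov_form assms(1-3) lyapunov_form_exp_Aut by blast
  then show "mat_exp t A \<in> Aut (p + q) (M_cone p q)" .
  show "positive_operator (mat_exp t A) (M_cone p q)"
    using B unfolding Aut_def positive_operator_def by blast
qed

end
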